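(* Let $\Phi$ be an irreducible root system of rank $n$ with base $\Delta$, and let $\Psi$ be a simple subroot system of $\Phi$ with $m$ simple roots, where $1\le m<n$. Then $$\frac{n}{|\Phi|}<\frac{m}{|\Psi|},$$ where $|\Phi|$ and $|\Psi|$ denote the total numbers of roots.
   Context: A simple subroot system of $\Phi$ is a subset of the form $\Psi=\{a_1\alpha_1+\dots+a_m\alpha_m:a_i\in\mathbb{Z}\}\cap\Phi$ where $\{\alpha_1,\dots,\alpha_m\}\subseteq\Delta$; then $\{\alpha_1,\dots,\alpha_m\}$ is a base of $\Psi$ (its simple roots). *)

theory Defs
  imports "HOL-Analysis.Analysis"
begin

definition reflect :: "'a::euclidean_space \<Rightarrow> 'a \<Rightarrow> 'a" where
  "reflect \<alpha> \<beta> = \<beta> - (2 * (\<beta> \<bullet> \<alpha>) / (\<alpha> \<bullet> \<alpha>)) *\<^sub>R \<alpha>"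

definition root_system :: "'a::euclidean_space set \<Rightarrow> bool" where
  "root_system \<Phi> \<longleftrightarrow>
     finite \<Phi> \<and> 0 \<notin> \<Phi> \<and> span \<Phi> = UNIV \<and>
     (\<forall>\<alpha>\<in>\<Phi>. \<forall>c::real. c *\<^sub>R \<alpha> \<in> \<Phi> \<longrightarrow> c = 1 \<or> c = -1) \<and>
     (\<forall>\<alpha>\<in>\<Phi>. \<forall>\<beta>\<in>\<Phi>. reflect \<alpha> \<beta> \<in> \<Phi>) \<and>
     (\<forall>\<alpha>\<in>\<Phi>. \<forall>\<beta>\<in>\<Phi>. 2 * (\<beta> \<bullet> \<alpha>) / (\<alpha> \<bullet> \<alpha>) \<in> \<int>)"

definition irreducible_root_system :: "'a::euclidean_space set \<Rightarrow> bool" where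
  "irreducible_root_system \<Phi> \<longleftrightarrow> root_system \<Phi> \<and>
     \<not> (\<exists>A B. A \<union> B = \<Phi> \<and> A \<noteq> {} \<and> B \<noteq> {} \<and> (\<forall>a\<in>A. \<forall>b\<in>B. a \<bullet> b = 0))"

definition is_base :: "'a::euclidean_space set \<Rightarrow> 'a set \<Rightarrow> bool" where
  "is_base \<Phi> \<Delta> \<longleftrightarrow> \<Delta> \<subseteq> \<Phi> \<and> independent \<Delta> \<and> span \<Delta> = UNIV \<and>
     (\<forall>\<beta>\<in>\<Phi>. \<exists>c::'a \<Rightarrow> real. \<beta> = (\<Sum>\<alpha>\<in>\<Delta>. c \<alpha> *\<^sub>R \<alpha>) \<and> (\<forall>\<alpha>\<in>\<Delta>. c \<alpha> \<in> \<int>) \<and>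
        ((\<forall>\<alpha>\<in>\<Delta>. c \<alpha> \<ge> 0) \<or> (\<forall>\<alpha>\<in>\<Delta>. c \<alpha> \<le> 0)))"

definition int_span :: "'a::euclidean_space set \<Rightarrow> 'a set" where
  "int_span S = {v. \<exists>a::'a \<Rightarrow> int. v = (\<Sum>\<alpha>\<in>S. of_int (a \<alpha>) *\<^sub>R \<alpha>)}"

definition simple_subroot_system :: "'a::euclidean_space set \<Rightarrow> 'a set \<Rightarrow> 'a set" where
  "simple_subroot_system \<Phi> S = int_span S \<inter> \<Phi>"

end

theory Submission
  imports Defs
begin

text \<open>The operator T v = \<Sum>\<beta>\<in>\<Phi>. (v \<bullet> \<beta>) / (\<beta> \<bullet> \<beta>) \<beta> is symmetric and commutes with every
  reflection in the Weyl group, so on an irreducible root system it is a scalar c.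
  Its trace over the whole space is |\<Phi>|, hence c = |\<Phi>| / n. Its trace over an
  orthonormal basis of a subspace U of dimension m is c m = \<Sum>\<beta>\<in>\<Phi>. |pr_U \<beta>|^2 / |\<beta>|^2;
  every root in U contributes 1, and by irreducibility some root outside U is not
  orthogonal to U and contributes a positive amount. So |\<Phi> \<inter> U| < |\<Phi>| m / n, and
  the simple subroot system generated by S lies in \<Phi> \<inter> span S.\<close>

definition frame_operator :: "'a::euclidean_space set \<Rightarrow> 'a \<Rightarrow> 'a" where
  "frame_operator \<Phi> v = (\<Sum>\<beta>\<in>\<Phi>. ((v \<bullet> \<beta>) / (\<beta> \<bullet> \<beta>)) *\<^sub>R \<beta>)"

lemma linear_frame_operator: "linear (frame_operator \<Phi>)"
  unfolding frame_operator_def linear_iff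
  by (auto simp: inner_add_left add_divide_distrib scaleR_add_left sum.distrib scaleR_sum_right)

lemma frame_operator_inner_commute: "frame_operator \<Phi> x \<bullet> y = x \<bullet> frame_operator \<Phi> y"
  unfolding frame_operator_def
  by (simp add: inner_sum_left inner_sum_right algebra_simps inner_commute)

lemma inner_frame_operator_self:
  "frame_operator \<Phi> x \<bullet> x = (\<Sum>\<beta>\<in>\<Phi>. (x \<bullet> \<beta>) * (x \<bullet> \<beta>) / (\<beta> \<bullet> \<beta>))"
  unfolding frame_operator_def by (simp add: inner_sum_left inner_sum_right inner_commute)

lemma sum_inner_frame_operator:
  "(\<Sum>b\<in>B. frame_operator \<Phi> b \<bullet> b) = (\<Sum>\<beta>\<in>\<Phi>. (\<Sum>b\<in>B. (b \<bullet> \<beta>) * (b \<bullet> \<beta>)) / (\<beta> \<bullet> \<beta>))"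
  unfolding inner_frame_operator_self by (subst sum.swap) (simp add: sum_divide_distrib)

lemma linear_reflect: "linear (reflect \<alpha>)"
proof (rule linearI)
  fix x y :: 'a
  show "reflect \<alpha> (x + y) = reflect \<alpha> x + reflect \<alpha> y"
    unfolding reflect_def by (simp add: inner_add_left add_divide_distrib scaleR_add_left)
next
  fix c :: real and x :: 'a
  have "2 * (c * (x \<bullet> \<alpha>)) / (\<alpha> \<bullet> \<alpha>) = c * (2 * (x \<bullet> \<alpha>) / (\<alpha> \<bullet> \<alpha>))" by simp
  then show "reflect \<alpha> (c *\<^sub>R x) = c *\<^sub>R reflect \<alpha> x"
    unfolding reflect_def by (simp add: scaleR_diff_right)
qed

lemma reflect_reflect: "\<alpha> \<noteq> 0 \<Longrightarrow> reflect \<alpha> (reflect \<alpha> \<beta>) = \<beta>"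
  unfolding reflect_def by (simp add: inner_diff_left algebra_simps)

lemma inner_reflect_reflect: "\<alpha> \<noteq> 0 \<Longrightarrow> reflect \<alpha> x \<bullet> reflect \<alpha> y = x \<bullet> y"
  unfolding reflect_def
  by (simp add: inner_diff_left inner_diff_right algebra_simps inner_commute)

lemma reflect_self: "\<alpha> \<noteq> 0 \<Longrightarrow> reflect \<alpha> \<alpha> = - \<alpha>"
  unfolding reflect_def by (simp add: scaleR_2)

lemma root_system_nonzero: "root_system \<Phi> \<Longrightarrow> \<alpha> \<in> \<Phi> \<Longrightarrow> \<alpha> \<noteq> 0"
  unfolding root_system_def by auto

lemma root_system_nonempty:
  assumes "root_system (\<Phi>::'a::euclidean_space set)"
  shows "\<Phi> \<noteq> {}"
proof
  assume "\<Phi> = {}"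
  then have "(UNIV::'a set) = {0}" using assms unfolding root_system_def by simp
  moreover obtain b :: 'a where "b \<in> Basis" using nonempty_Basis by blast
  ultimately show False using nonzero_Basis by auto
qed

lemma reflect_image_root_system:
  assumes rs: "root_system \<Phi>" and \<alpha>: "\<alpha> \<in> \<Phi>"
  shows "reflect \<alpha> ` \<Phi> = \<Phi>"
proof -
  have "reflect \<alpha> ` \<Phi> \<subseteq> \<Phi>" using rs \<alpha> unfolding root_system_def by auto
  moreover have "\<beta> \<in> reflect \<alpha> ` \<Phi>" if "\<beta> \<in> \<Phi>" for \<beta>
  proof (rule image_eqI)
    show "\<beta> = reflect \<alpha> (reflect \<alpha> \<beta>)"
      using reflect_reflect[OF root_system_nonzero[OF rs \<alpha>]] by simp
    show "reflect \<alpha> \<beta> \<in> \<Phi>" using calculation that by blast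
  qed
  ultimately show ?thesis by blast
qed

lemma frame_operator_reflect:
  assumes rs: "root_system \<Phi>" and \<alpha>: "\<alpha> \<in> \<Phi>"
  shows "frame_operator \<Phi> (reflect \<alpha> v) = reflect \<alpha> (frame_operator \<Phi> v)"
proof -
  have \<alpha>0: "\<alpha> \<noteq> 0" using root_system_nonzero[OF rs \<alpha>] .
  have inj: "inj_on (reflect \<alpha>) \<Phi>" by (metis inj_onI reflect_reflect \<alpha>0)
  have "frame_operator \<Phi> (reflect \<alpha> v)
      = (\<Sum>\<gamma>\<in>\<Phi>. ((reflect \<alpha> v \<bullet> reflect \<alpha> \<gamma>) / (reflect \<alpha> \<gamma> \<bullet> reflect \<alpha> \<gamma>)) *\<^sub>R reflect \<alpha> \<gamma>)"
    unfolding frame_operator_def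
    by (subst reflect_image_root_system[OF rs \<alpha>, symmetric], subst sum.reindex[OF inj])
       (simp add: o_def)
  also have "\<dots> = (\<Sum>\<gamma>\<in>\<Phi>. reflect \<alpha> (((v \<bullet> \<gamma>) / (\<gamma> \<bullet> \<gamma>)) *\<^sub>R \<gamma>))"
    by (simp add: inner_reflect_reflect[OF \<alpha>0] linear_scale[OF linear_reflect])
  also have "\<dots> = reflect \<alpha> (frame_operator \<Phi> v)"
    unfolding frame_operator_def by (simp add: linear_sum[OF linear_reflect])
  finally show ?thesis .
qed

text \<open>Since reflect \<alpha> (T \<alpha>) = T (reflect \<alpha> \<alpha>) = -T \<alpha>, the vector T \<alpha> lies on the line of \<alpha>.\<close>
lemma frame_operator_root_eigenvector:
  assumes rs: "root_system \<Phi>" and \<alpha>: "\<alpha> \<in> \<Phi>"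
  shows "frame_operator \<Phi> \<alpha> = ((frame_operator \<Phi> \<alpha> \<bullet> \<alpha>) / (\<alpha> \<bullet> \<alpha>)) *\<^sub>R \<alpha>"
proof -
  let ?T = "frame_operator \<Phi> \<alpha>"
  have "- ?T = reflect \<alpha> ?T"
    using frame_operator_reflect[OF rs \<alpha>, of \<alpha>] reflect_self[OF root_system_nonzero[OF rs \<alpha>]]
    by (simp add: linear_neg[OF linear_frame_operator])
  then have "2 *\<^sub>R ?T = (2 * (?T \<bullet> \<alpha>) / (\<alpha> \<bullet> \<alpha>)) *\<^sub>R \<alpha>"
    unfolding reflect_def by (simp add: algebra_simps scaleR_2)
  then have "(1/2::real) *\<^sub>R (2 *\<^sub>R ?T) = (1/2::real) *\<^sub>R ((2 * (?T \<bullet> \<alpha>) / (\<alpha> \<bullet> \<alpha>)) *\<^sub>R \<alpha>)"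
    by simp
  then show ?thesis by simp
qed

text \<open>Roots in different eigenspaces of the symmetric operator are orthogonal, so
  irreducibility forbids more than one eigenvalue.\<close>
lemma frame_operator_scalar:
  assumes irr: "irreducible_root_system (\<Phi>::'a::euclidean_space set)"
  obtains c where "\<And>v. frame_operator \<Phi> v = c *\<^sub>R v"
proof -
  have rs: "root_system \<Phi>" using irr unfolding irreducible_root_system_def by auto
  obtain \<alpha>0 where \<alpha>0: "\<alpha>0 \<in> \<Phi>" using root_system_nonempty[OF rs] by auto
  define l where "l \<beta> = (frame_operator \<Phi> \<beta> \<bullet> \<beta>) / (\<beta> \<bullet> \<beta>)" for \<beta>
  have eigen: "frame_operator \<Phi> \<beta> = l \<beta> *\<^sub>R \<beta>" if "\<beta> \<in> \<Phi>" for \<beta>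
    using frame_operator_root_eigenvector[OF rs that] unfolding l_def .
  define A where "A = {\<beta>\<in>\<Phi>. l \<beta> = l \<alpha>0}"
  have "a \<bullet> b = 0" if a: "a \<in> A" and b: "b \<in> \<Phi> - A" for a b
  proof (rule ccontr)
    assume nz: "a \<bullet> b \<noteq> 0"
    have "l a * (a \<bullet> b) = l b * (a \<bullet> b)"
      using frame_operator_inner_commute[of \<Phi> a b] eigen a b unfolding A_def by auto
    then show False using nz a b unfolding A_def by auto
  qed
  moreover have "A \<union> (\<Phi> - A) = \<Phi>" "A \<noteq> {}" unfolding A_def using \<alpha>0 by auto
  ultimately have "\<Phi> - A = {}" using irr unfolding irreducible_root_system_def by blast
  then have "\<forall>\<beta>\<in>\<Phi>. frame_operator \<Phi> \<beta> = l \<alpha>0 *\<^sub>R \<beta>" using eigen unfolding A_def by auto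
  then have "frame_operator \<Phi> v = l \<alpha>0 *\<^sub>R v" for v
    using linear_eq_on_span[OF linear_frame_operator linear_scale_self, where B=\<Phi> and x=v] rs
    unfolding root_system_def by auto
  then show ?thesis using that by blast
qed

lemma sum_inner_square_orthonormal_basis:
  assumes "pairwise orthogonal B" "\<And>b. b \<in> B \<Longrightarrow> norm b = 1" "finite B" "x \<in> span B"
  shows "(\<Sum>b\<in>B. (b \<bullet> x) * (b \<bullet> x)) = x \<bullet> x"
proof -
  have "x \<bullet> x = x \<bullet> (\<Sum>b\<in>B. (x \<bullet> b) *\<^sub>R b)"
    using orthonormal_basis_expand[OF assms(1,2) _ assms(3)] assms(4) by auto
  also have "\<dots> = (\<Sum>b\<in>B. (b \<bullet> x) * (b \<bullet> x))"
    by (simp add: inner_sum_right inner_commute)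
  finally show ?thesis by simp
qed

lemma sum_inner_square_eq_0_imp_orthogonal:
  assumes "finite B" "(\<Sum>b\<in>B. (b \<bullet> x) * (b \<bullet> x)) = 0" "y \<in> span B"
  shows "x \<bullet> y = 0"
proof -
  have "\<forall>b\<in>B. (b \<bullet> x) * (b \<bullet> x) = 0"
    using sum_nonneg_eq_0_iff[OF assms(1), of "\<lambda>b. (b \<bullet> x) * (b \<bullet> x)"] assms(2) by auto
  then have "orthogonal x b" if "b \<in> B" for b using that by (auto simp: orthogonal_def inner_commute)
  then show ?thesis using orthogonal_to_span[OF assms(3)] by (simp add: orthogonal_def)
qed

lemma card_Basis_eq_trace_frame_operator:
  assumes "root_system (\<Phi>::'a::euclidean_space set)"
  shows "(\<Sum>i\<in>Basis. frame_operator \<Phi> i \<bullet> i) = real (card \<Phi>)"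
proof -
  have parseval: "(\<Sum>i\<in>Basis. (i \<bullet> \<beta>) * (i \<bullet> \<beta>)) = \<beta> \<bullet> \<beta>" for \<beta> :: 'a
    by (subst (2) euclidean_inner) (simp add: inner_commute)
  have "(\<Sum>\<beta>\<in>\<Phi>. (\<Sum>i\<in>Basis. (i \<bullet> \<beta>) * (i \<bullet> \<beta>)) / (\<beta> \<bullet> \<beta>)) = (\<Sum>\<beta>\<in>\<Phi>. 1)"
    using root_system_nonzero[OF assms] by (intro sum.cong) (simp_all add: parseval)
  then show ?thesis by (simp add: sum_inner_frame_operator)
qed

text \<open>The weight (\<Sum>b\<in>B. (b \<bullet> \<beta>)^2) / (\<beta> \<bullet> \<beta>) is |pr_U \<beta>|^2 / |\<beta>|^2; it is 1 on roots in U and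
  positive on some root outside U.\<close>
theorem card_roots_in_subspace_less:
  fixes \<Phi> U :: "'a::euclidean_space set"
  assumes irr: "irreducible_root_system \<Phi>" and U: "subspace U" "U \<noteq> UNIV"
    and meets: "\<Phi> \<inter> U \<noteq> {}"
  shows "real (card (\<Phi> \<inter> U)) * DIM('a) < real (card \<Phi>) * dim U"
proof -
  have rs: "root_system \<Phi>" using irr unfolding irreducible_root_system_def by auto
  have fin: "finite \<Phi>" and sp: "span \<Phi> = UNIV" using rs unfolding root_system_def by auto
  have pos: "\<beta> \<bullet> \<beta> > 0" if "\<beta> \<in> \<Phi>" for \<beta>
    using root_system_nonzero[OF rs that] by simp
  obtain c where c: "\<And>v. frame_operator \<Phi> v = c *\<^sub>R v" using frame_operator_scalar[OF irr] by blast
  have cn: "c * DIM('a) = real (card \<Phi>)"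
    using card_Basis_eq_trace_frame_operator[OF rs] by (simp add: c mult.commute)
  obtain B where BU: "B \<subseteq> U" and orth: "pairwise orthogonal B" and unit: "\<And>x. x \<in> B \<Longrightarrow> norm x = 1"
      and ind: "independent B" and card: "card B = dim U" and span: "span B = U"
    using orthonormal_basis_subspace[OF U(1)] by metis
  have finB: "finite B" using ind finiteI_independent by blast
  define w where "w \<beta> = (\<Sum>b\<in>B. (b \<bullet> \<beta>) * (b \<bullet> \<beta>)) / (\<beta> \<bullet> \<beta>)" for \<beta>
  have cm: "(\<Sum>\<beta>\<in>\<Phi>. w \<beta>) = c * dim U"
    using sum_inner_frame_operator[where B=B and \<Phi>=\<Phi>] unit card unfolding w_def by (simp add: c norm_eq_1 mult.commute)
  have w_in: "w \<beta> = 1" if "\<beta> \<in> \<Phi>" "\<beta> \<in> U" for \<beta>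
    using sum_inner_square_orthonormal_basis[OF orth unit finB] that span pos[OF that(1)]
    unfolding w_def by simp
  have w_nonneg: "w \<beta> \<ge> 0" if "\<beta> \<in> \<Phi>" for \<beta>
    unfolding w_def using pos[OF that] by (intro divide_nonneg_pos sum_nonneg) auto
  obtain \<beta>0 where \<beta>0: "\<beta>0 \<in> \<Phi> - U" "w \<beta>0 > 0"
  proof -
    have "\<not> \<Phi> \<subseteq> U" using U sp span_minimal[of \<Phi> U] by auto
    then have "\<Phi> - U \<noteq> {}" by auto
    moreover have "(\<Phi> \<inter> U) \<union> (\<Phi> - U) = \<Phi>" by auto
    ultimately obtain a b where ab: "a \<in> \<Phi> \<inter> U" "b \<in> \<Phi> - U" "a \<bullet> b \<noteq> 0"
      using irr meets unfolding irreducible_root_system_def by metis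
    then have "w b \<noteq> 0"
      using sum_inner_square_eq_0_imp_orthogonal[OF finB, of b a] span pos[of b]
      unfolding w_def by (auto simp: inner_commute)
    then show ?thesis using that ab w_nonneg[of b] by auto
  qed
  have "(\<Sum>\<beta>\<in>\<Phi>. w \<beta>) = (\<Sum>\<beta>\<in>\<Phi> \<inter> U. w \<beta>) + (\<Sum>\<beta>\<in>\<Phi> - U. w \<beta>)"
    using fin by (metis Int_Diff_Un Int_Diff_disjoint finite_Int finite_Diff sum.union_disjoint)
  moreover have "(\<Sum>\<beta>\<in>\<Phi> \<inter> U. w \<beta>) = real (card (\<Phi> \<inter> U))" using w_in by simp
  moreover have "(\<Sum>\<beta>\<in>\<Phi> - U. w \<beta>) \<ge> w \<beta>0"
    using \<beta>0 fin w_nonneg by (intro member_le_sum) auto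
  ultimately have "real (card (\<Phi> \<inter> U)) < c * dim U" using cm \<beta>0 by linarith
  then have "real (card (\<Phi> \<inter> U)) * DIM('a) < c * dim U * DIM('a)" by simp
  also have "\<dots> = real (card \<Phi>) * dim U" by (simp add: cn[symmetric] algebra_simps)
  finally show ?thesis .
qed

lemma simple_subroot_system_subset_span: "simple_subroot_system \<Phi> S \<subseteq> \<Phi> \<inter> span S"
  unfolding simple_subroot_system_def int_span_def
  by (auto intro!: span_sum span_scale intro: span_base)

lemma subset_simple_subroot_system:
  assumes "finite S" "S \<subseteq> \<Phi>"
  shows "S \<subseteq> simple_subroot_system \<Phi> S"
proof
  fix s assume s: "s \<in> S"
  have "(\<Sum>\<alpha>\<in>S. of_int (if \<alpha> = s then 1 else 0) *\<^sub>R \<alpha>) = (\<Sum>\<alpha>\<in>S. if \<alpha> = s then \<alpha> else 0)"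
    by (rule sum.cong) auto
  also have "\<dots> = s" using assms(1) s by simp
  finally have "\<exists>a::'a \<Rightarrow> int. s = (\<Sum>\<alpha>\<in>S. of_int (a \<alpha>) *\<^sub>R \<alpha>)" by (intro exI) (rule sym)
  then show "s \<in> simple_subroot_system \<Phi> S"
    using s assms(2) unfolding simple_subroot_system_def int_span_def by auto
qed

theorem lemma3:
  fixes \<Phi> \<Delta> S :: "'a::euclidean_space set" and n m :: nat
  assumes "irreducible_root_system \<Phi>"
    and "is_base \<Phi> \<Delta>"
    and "n = DIM('a)"
    and "S \<subseteq> \<Delta>"
    and "m = card S"
    and "1 \<le> m" and "m < n"
  shows "real n / real (card \<Phi>) < real m / real (card (simple_subroot_system \<Phi> S))"
proof -
  have fin: "finite \<Phi>"
    using assms(1) unfolding irreducible_root_system_def root_system_def by auto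
  have S: "S \<subseteq> \<Phi>" "independent S"
    using assms(2,4) independent_mono unfolding is_base_def by auto
  have finS: "finite S" "S \<noteq> {}" using S fin finite_subset assms(5,6) by auto
  have dim: "dim (span S) = m" using dim_span_eq_card_independent[OF S(2)] assms(5) by simp
  then have "span S \<noteq> UNIV" using assms(3,7) by (metis dim_UNIV less_irrefl)
  moreover have "\<Phi> \<inter> span S \<noteq> {}" using finS S span_base by blast
  ultimately have lt: "real (card (\<Phi> \<inter> span S)) * n < real (card \<Phi>) * m"
    using card_roots_in_subspace_less[OF assms(1) subspace_span] dim assms(3) by metis
  let ?\<Psi> = "simple_subroot_system \<Phi> S"
  have "card ?\<Psi> \<le> card (\<Phi> \<inter> span S)"
    using simple_subroot_system_subset_span fin by (intro card_mono) auto
  then have "real (card ?\<Psi>) * n < real (card \<Phi>) * m"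
    using lt by (smt (verit) mult_right_mono of_nat_0_le_iff of_nat_le_iff)
  moreover have "card ?\<Psi> > 0" "card \<Phi> > 0"
    using subset_simple_subroot_system[OF finS(1) S(1)] finS S fin
    by (auto simp: card_gt_0_iff simple_subroot_system_def)
  ultimately show ?thesis by (simp add: divide_simps algebra_simps)
qed

end
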